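(* Let $L$ be a subspace of $\bigwedge^{k}V$. If $N_{j\to i}L=L$ for all distinct $i,j\in[n]$, then $L$ has a basis consisting of monomials $e_S=e_{s_1}\wedge\cdots\wedge e_{s_k}$ ($S=\{s_1<\cdots<s_k\}\subseteq[n]$).
   Context: $\mathbb{F}$ is a field (assumed throughout the paper, for expository purposes, to have characteristic not $2$), $V$ is an $n$-dimensional $\mathbb{F}$-vector space with a fixed basis $e_1,\dots,e_n$, and $\bigwedge V$ its exterior algebra. For $j\in[n]$, $V^{(j)}$ is the span of $\{e_h:h\neq j\}$. Slow shift: for distinct $i,j\in[n]$ and nonzero $m\in\bigwedge^kV$, write uniquely $m=x+e_j\wedge y$ with $x\in\bigwedge^kV^{(j)}$, $y\in\bigwedge^{k-1}V^{(j)}$, and set $N_{j\to i}m=x+e_i\wedge y$ if this is nonzero, and $N_{j\to i}m=e_j\wedge y$ otherwise (the limit as $t\to0$ of the projective action of the linear map $e_j\mapsto e_i+te_j$ fixing the other $e_h$). For a subspace $L$ of $\bigwedge^kV$, $N_{j\to i}L$ is the span of $\{N_{j\to i}m:m\in L\setminus\{0\}\}$. *)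

theory Defs
  imports Main HOL.Vector_Spaces "HOL-Library.Function_Algebras"
begin

text \<open>Coordinate model of the exterior algebra of V = F^n with basis e_1,...,e_n.
  An element of the exterior algebra is its coefficient function on subsets S of {1..n}:
  m = sum over S of (m S) e_S, where e_S = e_s1 wedge ... wedge e_sk with s1 < ... < sk.\<close>

definition fscale :: "'a::field \<Rightarrow> (nat set \<Rightarrow> 'a) \<Rightarrow> (nat set \<Rightarrow> 'a)" where
  "fscale c f = (\<lambda>S. c * f S)"

interpretation fvs: vector_space "fscale :: 'a::field \<Rightarrow> (nat set \<Rightarrow> 'a) \<Rightarrow> _"
  by unfold_locales (auto simp: fscale_def fun_eq_iff algebra_simps)

definition ext_pow :: "nat \<Rightarrow> nat \<Rightarrow> (nat set \<Rightarrow> 'a::field) set" where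
  "ext_pow n k = {m. \<forall>S. m S \<noteq> 0 \<longrightarrow> S \<subseteq> {1..n} \<and> card S = k}"

definition mono :: "nat set \<Rightarrow> (nat set \<Rightarrow> 'a::field)" where
  "mono S = (\<lambda>T. if T = S then 1 else 0)"

text \<open>Sign with e_i wedge e_T = wsign i T * e_(T union {i}) for i not in T.\<close>
definition wsign :: "nat \<Rightarrow> nat set \<Rightarrow> 'a::field" where
  "wsign i T = (-1) ^ card {t\<in>T. t < i}"

definition wedge_e :: "nat \<Rightarrow> (nat set \<Rightarrow> 'a::field) \<Rightarrow> (nat set \<Rightarrow> 'a)" where
  "wedge_e i y = (\<lambda>S. if i \<in> S then wsign i (S - {i}) * y (S - {i}) else 0)"

text \<open>Decomposition m = x + e_j wedge y with x, y not involving e_j.\<close>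
definition xpart :: "nat \<Rightarrow> (nat set \<Rightarrow> 'a::field) \<Rightarrow> (nat set \<Rightarrow> 'a)" where
  "xpart j m = (\<lambda>S. if j \<in> S then 0 else m S)"

definition ypart :: "nat \<Rightarrow> (nat set \<Rightarrow> 'a::field) \<Rightarrow> (nat set \<Rightarrow> 'a)" where
  "ypart j m = (\<lambda>T. if j \<in> T then 0 else wsign j T * m (insert j T))"

definition slow_shift :: "nat \<Rightarrow> nat \<Rightarrow> (nat set \<Rightarrow> 'a::field) \<Rightarrow> (nat set \<Rightarrow> 'a)" where
  "slow_shift j i m =
     (let x = xpart j m; y = ypart j m
      in if x + wedge_e i y \<noteq> 0 then x + wedge_e i y else wedge_e j y)"

definition slow_shift_space :: "nat \<Rightarrow> nat \<Rightarrow> (nat set \<Rightarrow> 'a::field) set \<Rightarrow> (nat set \<Rightarrow> 'a) set" where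
  "slow_shift_space j i L = fvs.span (slow_shift j i ` (L - {0}))"

lemma decomposition: "m = xpart j m + wedge_e j (ypart j m)"
  by (auto simp: fun_eq_iff xpart_def ypart_def wedge_e_def wsign_def insert_absorb
           simp flip: power_add mult.assoc)

end

theory Submission
  imports Defs
begin

text \<open>
  Besides the slow shift N = N_{j->i}, consider the naive shift P m = x + e_i wedge y of
  m = x + e_j wedge y.  P is linear, and N m = P m unless P m = 0, when N m = e_j wedge y.  So a
  subspace L stable under N_{j->i} and N_{i->j} is stable under P and under the naive shift P' from
  i to j, and contains x whenever P m = 0.  Now P kills m - P' P m, whose x-part is the component of
  m on the monomials containing e_i but not e_j; so that component lies in L.  Subtracting the
  symmetric component (e_j but not e_i) from m and applying P leaves exactly x.  Hence L is closed
  under taking x-parts for every j, and intersecting these coordinate projections isolates each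
  monomial occurring in an element of L.
\<close>

lemma sum_apply: "sum f A x = (\<Sum>a\<in>A. f a x)"
  by (induction A rule: infinite_finite_induct) auto

lemma wsign_mult_self_left [simp]: "wsign i T * (wsign i T * x) = (x::'a::field)"
  by (simp add: wsign_def flip: power_add mult.assoc)

definition naive_shift :: "nat \<Rightarrow> nat \<Rightarrow> (nat set \<Rightarrow> 'a::field) \<Rightarrow> (nat set \<Rightarrow> 'a)" where
  "naive_shift j i m = xpart j m + wedge_e i (ypart j m)"

definition coeff_restrict :: "(nat set \<Rightarrow> bool) \<Rightarrow> (nat set \<Rightarrow> 'a::zero) \<Rightarrow> (nat set \<Rightarrow> 'a)" where
  "coeff_restrict P m = (\<lambda>S. if P S then m S else 0)"

lemma slow_shift_eq_naive_shift:
  "slow_shift j i m = (if naive_shift j i m \<noteq> 0 then naive_shift j i m else wedge_e j (ypart j m))"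
  by (simp add: slow_shift_def naive_shift_def Let_def)

lemma naive_shift_0 [simp]: "naive_shift j i 0 = 0"
  by (simp add: naive_shift_def xpart_def ypart_def wedge_e_def fun_eq_iff)

lemma naive_shift_apply_mem:
  "i \<noteq> j \<Longrightarrow> j \<in> S \<Longrightarrow> naive_shift j i m S = 0"
  by (auto simp: naive_shift_def xpart_def wedge_e_def ypart_def)

lemma naive_shift_apply_not_mem:
  "i \<notin> S \<Longrightarrow> j \<notin> S \<Longrightarrow> naive_shift j i m S = m S"
  by (auto simp: naive_shift_def xpart_def wedge_e_def ypart_def)

lemma naive_shift_apply_insert:
  "i \<notin> T \<Longrightarrow> j \<notin> T \<Longrightarrow> i \<noteq> j \<Longrightarrow>
    naive_shift j i m (insert i T) = m (insert i T) + wsign i T * wsign j T * m (insert j T)"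
  by (auto simp: naive_shift_def xpart_def wedge_e_def ypart_def insert_Diff_if)

lemma shift_coordinate_cases:
  obtains "j \<in> S" | "i \<notin> S" "j \<notin> S" | T where "S = insert i T" "i \<notin> T" "j \<notin> T"
  by (metis insert_Diff Diff_iff singletonI)

lemma naive_shift_back_and_forth_eq_0:
  fixes m :: "nat set \<Rightarrow> 'a::field"
  assumes "i \<noteq> j"
  shows "naive_shift j i (m - naive_shift i j (naive_shift j i m)) = 0"
proof
  fix S
  show "naive_shift j i (m - naive_shift i j (naive_shift j i m)) S = 0 S"
  proof (cases rule: shift_coordinate_cases[where i=i and j=j and S=S])
    case (3 T)
    let ?u = "naive_shift j i m" and ?w = "naive_shift i j (naive_shift j i m)"
    have u: "?u (insert j T) = 0" "?u (insert i T) = m (insert i T) + wsign i T * wsign j T * m (insert j T)"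
      using 3 assms by (simp_all add: naive_shift_apply_mem naive_shift_apply_insert)
    have w: "?w (insert i T) = 0" "?w (insert j T) = wsign j T * wsign i T * ?u (insert i T)"
      using 3 assms u(1) by (simp_all add: naive_shift_apply_mem naive_shift_apply_insert[of j T i])
    have "naive_shift j i (m - ?w) S
        = (m - ?w) (insert i T) + wsign i T * wsign j T * (m - ?w) (insert j T)"
      using 3 assms by (simp add: naive_shift_apply_insert)
    also have "\<dots> = 0"
      unfolding fun_diff_def w u(2) by (simp add: algebra_simps)
    finally show ?thesis by simp
  qed (use assms in \<open>simp_all add: naive_shift_apply_mem naive_shift_apply_not_mem\<close>)
qed

lemma xpart_back_and_forth:
  fixes m :: "nat set \<Rightarrow> 'a::field"
  assumes "i \<noteq> j"
  shows "xpart j (m - naive_shift i j (naive_shift j i m)) = coeff_restrict (\<lambda>S. i \<in> S \<and> j \<notin> S) m"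
proof
  fix S
  show "xpart j (m - naive_shift i j (naive_shift j i m)) S = coeff_restrict (\<lambda>S. i \<in> S \<and> j \<notin> S) m S"
    using assms by (cases rule: shift_coordinate_cases[where i=i and j=j and S=S])
      (simp_all add: xpart_def coeff_restrict_def naive_shift_apply_mem naive_shift_apply_not_mem)
qed

lemma naive_shift_minus_coeff_restrict:
  fixes m :: "nat set \<Rightarrow> 'a::field"
  assumes "i \<noteq> j"
  shows "naive_shift j i (m - coeff_restrict (\<lambda>S. j \<in> S \<and> i \<notin> S) m) = xpart j m"
proof
  fix S
  show "naive_shift j i (m - coeff_restrict (\<lambda>S. j \<in> S \<and> i \<notin> S) m) S = xpart j m S"
    using assms by (cases rule: shift_coordinate_cases[where i=i and j=j and S=S])
      (simp_all add: xpart_def coeff_restrict_def naive_shift_apply_mem naive_shift_apply_not_mem naive_shift_apply_insert)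
qed

lemma slow_shift_mem:
  assumes "slow_shift_space j i L \<subseteq> L" "m \<in> L" "m \<noteq> 0"
  shows "slow_shift j i m \<in> L"
  using assms unfolding slow_shift_space_def by (blast intro: fvs.span_base)

lemma naive_shift_mem:
  assumes L: "fvs.subspace L" "slow_shift_space j i L \<subseteq> L" and m: "m \<in> L"
  shows "naive_shift j i m \<in> L"
proof (cases "naive_shift j i m = 0")
  case True
  then show ?thesis
    using fvs.subspace_0[OF L(1)] by simp
next
  case False
  then have "m \<noteq> 0" by auto
  then show ?thesis
    using slow_shift_mem[OF L(2) m] False by (simp add: slow_shift_eq_naive_shift)
qed

lemma xpart_mem_if_naive_shift_eq_0:
  assumes L: "fvs.subspace L" "slow_shift_space j i L \<subseteq> L" and m: "m \<in> L"
    and "naive_shift j i m = 0"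
  shows "xpart j m \<in> L"
proof (cases "m = 0")
  case True
  then show ?thesis
    using fvs.subspace_0[OF L(1)] by (simp add: xpart_def zero_fun_def)
next
  case False
  then have "wedge_e j (ypart j m) \<in> L"
    using slow_shift_mem[OF L(2) m] assms(4) by (simp add: slow_shift_eq_naive_shift)
  moreover have "xpart j m = m - wedge_e j (ypart j m)"
    by (metis add_diff_cancel_right' decomposition)
  ultimately show ?thesis
    using fvs.subspace_diff[OF L(1) m] by simp
qed

lemma coeff_restrict_mem_if_stable_pair:
  assumes "i \<noteq> j" and L: "fvs.subspace L" "slow_shift_space j i L \<subseteq> L" "slow_shift_space i j L \<subseteq> L"
    and m: "m \<in> L"
  shows "coeff_restrict (\<lambda>S. i \<in> S \<and> j \<notin> S) m \<in> L"
proof -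
  have "naive_shift i j (naive_shift j i m) \<in> L"
    using naive_shift_mem[OF L(1,3) naive_shift_mem[OF L(1,2) m]] .
  then have "m - naive_shift i j (naive_shift j i m) \<in> L"
    using fvs.subspace_diff[OF L(1) m] by blast
  then have "xpart j (m - naive_shift i j (naive_shift j i m)) \<in> L"
    using xpart_mem_if_naive_shift_eq_0[OF L(1,2)] naive_shift_back_and_forth_eq_0[OF assms(1)] by blast
  then show ?thesis
    by (simp only: xpart_back_and_forth[OF assms(1)])
qed

lemma xpart_mem_if_stable_pair:
  assumes "i \<noteq> j" and L: "fvs.subspace L" "slow_shift_space j i L \<subseteq> L" "slow_shift_space i j L \<subseteq> L"
    and m: "m \<in> L"
  shows "xpart j m \<in> L"
proof -
  have "coeff_restrict (\<lambda>S. j \<in> S \<and> i \<notin> S) m \<in> L"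
    using coeff_restrict_mem_if_stable_pair[OF assms(1)[symmetric] L(1) L(3) L(2) m] .
  then have "m - coeff_restrict (\<lambda>S. j \<in> S \<and> i \<notin> S) m \<in> L"
    using fvs.subspace_diff[OF L(1) m] by blast
  then have "naive_shift j i (m - coeff_restrict (\<lambda>S. j \<in> S \<and> i \<notin> S) m) \<in> L"
    by (rule naive_shift_mem[OF L(1,2)])
  then show ?thesis
    by (simp only: naive_shift_minus_coeff_restrict[OF assms(1)])
qed

lemma xpart_ext_pow_singleton:
  assumes "{1..n} = {j}" "m \<in> ext_pow n k"
  shows "xpart j m = (if k = 0 then m else 0)"
proof
  fix S
  show "xpart j m S = (if k = 0 then m else 0) S"
  proof (cases "m S = 0")
    case False
    then have "S = {} \<and> k = 0 \<or> S = {j} \<and> k = 1"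
      using assms by (auto simp: ext_pow_def subset_singleton_iff)
    then show ?thesis by (auto simp: xpart_def)
  qed (simp add: xpart_def)
qed

lemma xpart_mem_if_slow_shift_stable:
  assumes L: "fvs.subspace L" "L \<subseteq> ext_pow n k"
    and stable: "\<And>i j. i \<in> {1..n} \<Longrightarrow> j \<in> {1..n} \<Longrightarrow> i \<noteq> j \<Longrightarrow> slow_shift_space j i L \<subseteq> L"
    and j: "j \<in> {1..n}" and m: "m \<in> L"
  shows "xpart j m \<in> L"
proof (cases "{1..n} = {j}")
  case True
  then have "xpart j m = (if k = 0 then m else 0)"
    using xpart_ext_pow_singleton L(2) m by blast
  then show ?thesis
    using m fvs.subspace_0[OF L(1)] by simp
next
  case False
  then obtain i where i: "i \<in> {1..n}" "i \<noteq> j"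
    using j by blast
  show ?thesis
    using xpart_mem_if_stable_pair[OF i(2) L(1) stable stable m] i j by blast
qed

lemma coeff_restrict_mem_if_xpart_closed:
  assumes L: "fvs.subspace L" and closed: "\<And>j m. j \<in> J \<Longrightarrow> m \<in> L \<Longrightarrow> xpart j m \<in> L"
    and "finite J" "m \<in> L"
  shows "coeff_restrict (\<lambda>T. T \<inter> J = S \<inter> J) m \<in> L"
  using \<open>finite J\<close> closed
proof (induction J rule: finite_induct)
  case empty
  then show ?case using \<open>m \<in> L\<close> by (simp add: coeff_restrict_def)
next
  case (insert j J)
  let ?g = "coeff_restrict (\<lambda>T. T \<inter> J = S \<inter> J) m"
  have g: "?g \<in> L" and xg: "xpart j ?g \<in> L"
    using insert by simp_all
  show ?case
  proof (cases "j \<in> S")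
    case True
    then have "coeff_restrict (\<lambda>T. T \<inter> insert j J = S \<inter> insert j J) m = ?g - xpart j ?g"
      by (auto simp: fun_eq_iff coeff_restrict_def xpart_def)
    then show ?thesis using fvs.subspace_diff[OF L g xg] by (simp only:)
  next
    case False
    then have "coeff_restrict (\<lambda>T. T \<inter> insert j J = S \<inter> insert j J) m = xpart j ?g"
      by (auto simp: fun_eq_iff coeff_restrict_def xpart_def)
    then show ?thesis using xg by simp
  qed
qed

lemma coeff_restrict_ext_pow:
  assumes "m \<in> ext_pow n k" "S \<subseteq> {1..n}"
  shows "coeff_restrict (\<lambda>T. T \<inter> {1..n} = S \<inter> {1..n}) m = fscale (m S) (mono S)"
proof
  fix T
  have "T \<inter> {1..n} = S \<inter> {1..n} \<longleftrightarrow> T = S" if "m T \<noteq> 0"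
  proof -
    have "T \<subseteq> {1..n}"
      using assms(1) that by (simp add: ext_pow_def)
    then show ?thesis using assms(2) by blast
  qed
  then show "coeff_restrict (\<lambda>T. T \<inter> {1..n} = S \<inter> {1..n}) m T = fscale (m S) (mono S) T"
    by (cases "m T = 0") (auto simp: coeff_restrict_def fscale_def mono_def)
qed

lemma mono_mem_if_xpart_closed:
  assumes L: "fvs.subspace L" "L \<subseteq> ext_pow n k"
    and closed: "\<And>j m. j \<in> {1..n} \<Longrightarrow> m \<in> L \<Longrightarrow> xpart j m \<in> L"
    and m: "m \<in> L" "m S \<noteq> 0"
  shows "mono S \<in> L"
proof -
  have "S \<subseteq> {1..n}"
    using L(2) m unfolding ext_pow_def by blast
  then have "coeff_restrict (\<lambda>T. T \<inter> {1..n} = S \<inter> {1..n}) m = fscale (m S) (mono S)"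
    using coeff_restrict_ext_pow L(2) m(1) by blast
  moreover have "coeff_restrict (\<lambda>T. T \<inter> {1..n} = S \<inter> {1..n}) m \<in> L"
    using coeff_restrict_mem_if_xpart_closed[where J = "{1..n}", OF L(1) closed _ m(1)] by simp
  ultimately have "fscale (m S) (mono S) \<in> L"
    by simp
  then have "fscale (inverse (m S)) (fscale (m S) (mono S)) \<in> L"
    by (rule fvs.subspace_scale[OF L(1)])
  moreover have "fscale (inverse (m S)) (fscale (m S) (mono S)) = mono S"
    using m(2) by (simp add: fscale_def fun_eq_iff)
  ultimately show ?thesis by simp
qed

lemma sum_mono_expansion:
  assumes "finite {S. m S \<noteq> 0}"
  shows "(\<Sum>S | m S \<noteq> 0. fscale (m S) (mono S)) = m"
proof
  fix T
  have "(\<Sum>S | m S \<noteq> 0. fscale (m S) (mono S)) T = (\<Sum>S | m S \<noteq> 0. if T = S then m S else 0)"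
    unfolding sum_apply by (intro sum.cong) (auto simp: fscale_def mono_def)
  also have "\<dots> = m T"
    using assms by simp
  finally show "(\<Sum>S | m S \<noteq> 0. fscale (m S) (mono S)) T = m T" .
qed

lemma independent_range_mono: "fvs.independent (range mono)"
  unfolding fvs.independent_explicit_module
proof (intro allI impI)
  fix t u and v :: "nat set \<Rightarrow> 'a::field"
  assume t: "finite t" "t \<subseteq> range mono" "(\<Sum>v\<in>t. fscale (u v) v) = 0" "v \<in> t"
  then obtain S where v: "v = mono S" by blast
  have "u w * w S = 0" if w: "w \<in> t - {v}" for w
  proof -
    obtain R where "w = mono R"
      using w t(2) by blast
    moreover have "R \<noteq> S"
      using w v calculation by blast
    ultimately show ?thesis by (simp add: mono_def)
  qed
  then have "(\<Sum>w\<in>t - {v}. u w * w S) = 0"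
    by (rule sum.neutral[OF ballI])
  then have "(\<Sum>w\<in>t. u w * w S) = u v"
    using sum.remove[OF t(1,4), of "\<lambda>w. u w * w S"] v by (simp add: mono_def)
  moreover have "(\<Sum>w\<in>t. u w * w S) = 0"
    using fun_cong[OF t(3), of S] by (simp add: sum_apply fscale_def)
  ultimately show "u v = 0" by simp
qed

lemma monomial_basis_if_xpart_closed:
  assumes L: "fvs.subspace L" "L \<subseteq> ext_pow n k"
    and closed: "\<And>j m. j \<in> {1..n} \<Longrightarrow> m \<in> L \<Longrightarrow> xpart j m \<in> L"
  shows "\<exists>B. B \<subseteq> {mono S | S. S \<subseteq> {1..n} \<and> card S = k} \<and> fvs.independent B \<and> fvs.span B = L"
proof (intro exI conjI)
  let ?B = "L \<inter> {mono S | S. S \<subseteq> {1..n} \<and> card S = k}"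
  show "?B \<subseteq> {mono S | S. S \<subseteq> {1..n} \<and> card S = k}"
    by (rule Int_lower2)
  show "fvs.independent ?B"
    by (rule fvs.independent_mono[OF independent_range_mono]) blast
  have "L \<subseteq> fvs.span ?B"
  proof
    fix m assume m: "m \<in> L"
    have supp: "{S. m S \<noteq> 0} \<subseteq> {S. S \<subseteq> {1..n} \<and> card S = k}"
      using L(2) m unfolding ext_pow_def by blast
    moreover have "finite {S. S \<subseteq> {1..n} \<and> card S = k}"
      by (rule finite_subset[of _ "Pow {1..n}"]) auto
    ultimately have "finite {S. m S \<noteq> 0}"
      by (rule finite_subset)
    then have "m = (\<Sum>S | m S \<noteq> 0. fscale (m S) (mono S))"
      by (rule sum_mono_expansion[symmetric])
    also have "\<dots> \<in> fvs.span ?B"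
    proof (intro fvs.span_sum fvs.span_scale fvs.span_base)
      fix S assume S: "S \<in> {S. m S \<noteq> 0}"
      then have "mono S \<in> L"
        using mono_mem_if_xpart_closed[OF L closed m] by blast
      then show "mono S \<in> ?B"
        using S supp by blast
    qed
    finally show "m \<in> fvs.span ?B" .
  qed
  then show "fvs.span ?B = L"
    by (rule fvs.span_subspace[OF Int_lower1 _ L(1)])
qed

theorem corollary3p14:
  fixes L :: "(nat set \<Rightarrow> 'a::field) set" and n k :: nat
  assumes char: "(2::'a) \<noteq> 0"
    and sub: "fvs.subspace L" and inpow: "L \<subseteq> ext_pow n k"
    and fixed: "\<forall>i\<in>{1..n}. \<forall>j\<in>{1..n}. i \<noteq> j \<longrightarrow> slow_shift_space j i L = L"
  shows "\<exists>B. B \<subseteq> {mono S | S. S \<subseteq> {1..n} \<and> card S = k}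
              \<and> fvs.independent B \<and> fvs.span B = L"
proof -
  \<comment> \<open>Signs enter only through wsign squared, which is 1.\<close>
  have "slow_shift_space j i L \<subseteq> L" if "i \<in> {1..n}" "j \<in> {1..n}" "i \<noteq> j" for i j
    using fixed that by blast
  then have "xpart j m \<in> L" if "j \<in> {1..n}" "m \<in> L" for j m
    using xpart_mem_if_slow_shift_stable[OF sub inpow] that by blast
  then show ?thesis
    by (rule monomial_basis_if_xpart_closed[OF sub inpow])
qed

end
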